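(* Let $N>0$, $m>0$, $F>0$, $\alpha>0$ be fixed with $Nm>\alpha$, and for $g\geq 0$, $\tau\in(0,1)$, $L_g\geq 0$ define \[ L=\frac{N\left[(1-\tau)(mL_g+\alpha F)+(mg+F)mN\right]}{\alpha+(Nm-\alpha)\tau},\qquad q=\frac{(1-\tau)(L+L_g-\alpha g)}{\left(Nm+\alpha(1-\tau)\right)(L+L_g)}, \] regarded as functions of $(g,\tau,L_g)$. Then \[ \frac{\partial q}{\partial g}<0,\qquad \frac{\partial q}{\partial \tau}<0,\qquad \frac{\partial q}{\partial L_g}\geq 0 . \]
   Context: $L$ is equilibrium private employment and $q$ equilibrium per-capita consumption of each variety in a monopolistic-competition general equilibrium model with a measure $N$ of firms, marginal and fixed labor inputs $m$ and $F$, CARA utility parameter $\alpha$, income tax rate $\tau$, government purchase $g$ of each variety, and government employment $L_g$. Partial derivatives are taken in $(g,\tau,L_g)$ with other parameters fixed. *)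

theory Defs
  imports Complex_Main
begin

definition empL :: "real \<Rightarrow> real \<Rightarrow> real \<Rightarrow> real \<Rightarrow> real \<Rightarrow> real \<Rightarrow> real \<Rightarrow> real" where
  "empL N m F \<alpha> g \<tau> Lg =
     N * ((1 - \<tau>) * (m * Lg + \<alpha> * F) + (m * g + F) * m * N) / (\<alpha> + (N * m - \<alpha>) * \<tau>)"

definition consq :: "real \<Rightarrow> real \<Rightarrow> real \<Rightarrow> real \<Rightarrow> real \<Rightarrow> real \<Rightarrow> real \<Rightarrow> real" where
  "consq N m F \<alpha> g \<tau> Lg =
     (let L = empL N m F \<alpha> g \<tau> Lg in
      (1 - \<tau>) * (L + Lg - \<alpha> * g) / ((N * m + \<alpha> * (1 - \<tau>)) * (L + Lg)))"

end

theory Submission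
  imports Defs
begin

(* Write q = h(tau) (S - alpha g) / S with S = L + Lg and h(tau) = (1 - tau) / (N m + alpha (1 - tau)),
  which is positive and decreasing. L is affine in g with slope
  N^2 m^2 / (alpha + (N m - alpha) tau) > N m > alpha, so S > alpha g, and the g-derivative of
  (S - alpha g) / S has numerator -alpha (S - g dS/dg), i.e. -alpha times the value of S at g = 0.
  S increases with Lg, so the relative gap (S - alpha g) / S does too. A higher tax rate raises
  the denominator of L and lowers its numerator, so in tau both factors of q decrease. *)

lemma DERIV_mult_relative_gap:
  fixes h S u :: "real \<Rightarrow> real"
  assumes "(h has_real_derivative h') (at t)" "(S has_real_derivative S') (at t)"
    and "(u has_real_derivative u') (at t)" "S t \<noteq> 0"
  shows "((\<lambda>x. h x * ((S x - u x) / S x)) has_real_derivative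
           h' * ((S t - u t) / S t) + h t * ((u t * S' - u' * S t) / (S t)\<^sup>2)) (at t)"
  using assms by (auto intro!: derivative_eq_intros simp: field_simps power2_eq_square)

locale economy =
  fixes N m F \<alpha> :: real
  assumes N_pos: "0 < N" and m_pos: "0 < m" and F_pos: "0 < F" and \<alpha>_pos: "0 < \<alpha>"
    and \<alpha>_less: "\<alpha> < N * m"
begin

abbreviation L :: "real \<Rightarrow> real \<Rightarrow> real \<Rightarrow> real" where
  "L \<equiv> empL N m F \<alpha>"

abbreviation q :: "real \<Rightarrow> real \<Rightarrow> real \<Rightarrow> real" where
  "q \<equiv> consq N m F \<alpha>"

abbreviation den :: "real \<Rightarrow> real" where
  "den \<tau> \<equiv> \<alpha> + (N * m - \<alpha>) * \<tau>"

definition tax_factor :: "real \<Rightarrow> real" where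
  "tax_factor \<tau> = (1 - \<tau>) / (N * m + \<alpha> * (1 - \<tau>))"

lemma den_pos: "0 \<le> \<tau> \<Longrightarrow> 0 < den \<tau>"
  using \<alpha>_pos \<alpha>_less mult_nonneg_nonneg[of "N * m - \<alpha>" \<tau>] by linarith

lemma den_less: "\<tau> < 1 \<Longrightarrow> den \<tau> < N * m"
proof -
  assume "\<tau> < 1"
  then have "(N * m - \<alpha>) * \<tau> < (N * m - \<alpha>) * 1"
    using \<alpha>_less by (intro mult_strict_left_mono) auto
  then show ?thesis
    by simp
qed

lemma empL_affine_in_g:
  "L g \<tau> Lg = L 0 \<tau> Lg + N * (m * m * N) / den \<tau> * g"
  unfolding empL_def by (simp add: algebra_simps flip: add_divide_distrib)

lemma empL_at_zero_pos:
  assumes "0 \<le> \<tau>" "\<tau> \<le> 1" "0 \<le> Lg"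
  shows "0 < L 0 \<tau> Lg"
proof -
  have "0 \<le> (1 - \<tau>) * (m * Lg + \<alpha> * F)"
    using assms m_pos \<alpha>_pos F_pos by simp
  moreover have "0 < F * m * N"
    using F_pos m_pos N_pos by simp
  ultimately show ?thesis
    unfolding empL_def using N_pos den_pos[OF assms(1)] by simp
qed

lemma alpha_less_empL_slope_g:
  assumes "0 \<le> \<tau>" "\<tau> < 1"
  shows "\<alpha> < N * (m * m * N) / den \<tau>"
proof -
  have "N * m = N * (m * m * N) / (N * m)"
    using N_pos m_pos by simp
  also have "\<dots> < N * (m * m * N) / den \<tau>"
    using den_pos[OF assms(1)] den_less[OF assms(2)] N_pos m_pos
    by (intro divide_strict_left_mono) auto
  finally show ?thesis
    using \<alpha>_less by linarith
qed

lemma alpha_g_less_total_employment: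
  assumes "0 \<le> g" "0 \<le> \<tau>" "\<tau> < 1" "0 \<le> Lg"
  shows "\<alpha> * g < L g \<tau> Lg + Lg"
proof -
  have "\<alpha> * g \<le> N * (m * m * N) / den \<tau> * g"
    using alpha_less_empL_slope_g[OF assms(2,3)] assms(1) by (intro mult_right_mono) auto
  then show ?thesis
    using empL_affine_in_g[of g \<tau> Lg] empL_at_zero_pos[of \<tau> Lg] assms by linarith
qed

lemma DERIV_empL_g: "((\<lambda>x. L x \<tau> Lg) has_real_derivative N * (m * m * N) / den \<tau>) (at g)"
proof -
  have "((\<lambda>x. N * ((1 - \<tau>) * (m * Lg + \<alpha> * F) + (m * x + F) * m * N)) has_real_derivative
          N * (m * m * N)) (at g)"
    by (auto intro!: derivative_eq_intros simp: algebra_simps)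
  then show ?thesis
    unfolding empL_def by (rule DERIV_cdivide)
qed

lemma DERIV_empL_Lg: "((\<lambda>x. L g \<tau> x) has_real_derivative N * (1 - \<tau>) * m / den \<tau>) (at Lg)"
proof -
  have "((\<lambda>x. N * ((1 - \<tau>) * (m * x + \<alpha> * F) + (m * g + F) * m * N)) has_real_derivative
          N * (1 - \<tau>) * m) (at Lg)"
    by (auto intro!: derivative_eq_intros simp: algebra_simps)
  then show ?thesis
    unfolding empL_def by (rule DERIV_cdivide)
qed

lemma DERIV_empL_tau:
  assumes "0 \<le> \<tau>"
  shows "((\<lambda>x. L g x Lg) has_real_derivative
           - N * (N * m * (m * Lg + \<alpha> * F) + (N * m - \<alpha>) * ((m * g + F) * m * N)) / (den \<tau>)\<^sup>2)
         (at \<tau>)"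
proof -
  let ?K = "m * Lg + \<alpha> * F" and ?C = "(m * g + F) * m * N"
  have "((\<lambda>x. L g x Lg) has_real_derivative
          (N * - ?K * den \<tau> - N * ((1 - \<tau>) * ?K + ?C) * (N * m - \<alpha>)) / (den \<tau> * den \<tau>)) (at \<tau>)"
    unfolding empL_def using den_pos[OF assms]
    by (intro derivative_eq_intros refl) auto
  moreover have "N * - ?K * den \<tau> - N * ((1 - \<tau>) * ?K + ?C) * (N * m - \<alpha>)
                 = - N * (N * m * ?K + (N * m - \<alpha>) * ?C)"
    by (simp add: algebra_simps)
  ultimately show ?thesis
    by (simp add: power2_eq_square)
qed

lemma consq_eq_tax_factor_mult:
  "q g \<tau> Lg = tax_factor \<tau> * ((L g \<tau> Lg + Lg - \<alpha> * g) / (L g \<tau> Lg + Lg))"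
  unfolding consq_def tax_factor_def Let_def by (simp add: times_divide_times_eq)

lemma tax_factor_pos: "\<tau> < 1 \<Longrightarrow> 0 < tax_factor \<tau>"
  unfolding tax_factor_def using N_pos m_pos \<alpha>_pos by (simp add: add_pos_pos)

lemma DERIV_tax_factor:
  assumes "\<tau> < 1"
  shows "(tax_factor has_real_derivative - (N * m) / (N * m + \<alpha> * (1 - \<tau>))\<^sup>2) (at \<tau>)"
proof -
  have "0 < N * m + \<alpha> * (1 - \<tau>)"
    using assms N_pos m_pos \<alpha>_pos by (simp add: add_pos_pos)
  then show ?thesis
    unfolding tax_factor_def
    by (auto intro!: derivative_eq_intros simp: field_simps power2_eq_square)
qed

context
  fixes g \<tau> Lg :: real
  assumes g_nonneg: "0 \<le> g" and \<tau>_nonneg: "0 \<le> \<tau>" and \<tau>_less_1: "\<tau> < 1"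
    and Lg_nonneg: "0 \<le> Lg"
begin

lemma total_employment_pos: "0 < L g \<tau> Lg + Lg"
  using alpha_g_less_total_employment[OF g_nonneg \<tau>_nonneg \<tau>_less_1 Lg_nonneg]
    \<alpha>_pos g_nonneg mult_nonneg_nonneg[of \<alpha> g]
  by linarith

lemma consq_decreasing_in_g: "\<exists>D. ((\<lambda>x. q x \<tau> Lg) has_real_derivative D) (at g) \<and> D < 0"
proof -
  let ?S = "L g \<tau> Lg + Lg" and ?s = "N * (m * m * N) / den \<tau>"
  have "((\<lambda>x. L x \<tau> Lg + Lg) has_real_derivative ?s) (at g)"
    using DERIV_add[OF DERIV_empL_g DERIV_const] by simp
  then have "((\<lambda>x. q x \<tau> Lg) has_real_derivative
               0 * ((?S - \<alpha> * g) / ?S) + tax_factor \<tau> * ((\<alpha> * g * ?s - \<alpha> * ?S) / ?S\<^sup>2)) (at g)"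
    unfolding consq_eq_tax_factor_mult
    by (rule DERIV_mult_relative_gap[OF DERIV_const _ DERIV_cmult_Id])
      (use total_employment_pos in simp_all)
  moreover have "\<alpha> * g * ?s - \<alpha> * ?S = - \<alpha> * (L 0 \<tau> Lg + Lg)"
    using empL_affine_in_g[of g \<tau> Lg] by (simp add: algebra_simps)
  moreover have "0 < L 0 \<tau> Lg + Lg"
    using empL_at_zero_pos[OF \<tau>_nonneg _ Lg_nonneg] \<tau>_less_1 Lg_nonneg by simp
  ultimately show ?thesis
    using tax_factor_pos[OF \<tau>_less_1] \<alpha>_pos total_employment_pos
    by (auto simp: mult_pos_neg divide_neg_pos)
qed

lemma consq_nondecreasing_in_Lg: "\<exists>D. ((\<lambda>x. q g \<tau> x) has_real_derivative D) (at Lg) \<and> 0 \<le> D"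
proof -
  let ?S = "L g \<tau> Lg + Lg" and ?s = "N * (1 - \<tau>) * m / den \<tau> + 1"
  have "((\<lambda>x. L g \<tau> x + x) has_real_derivative ?s) (at Lg)"
    using DERIV_add[OF DERIV_empL_Lg DERIV_ident] by simp
  then have "((\<lambda>x. q g \<tau> x) has_real_derivative
               0 * ((?S - \<alpha> * g) / ?S) + tax_factor \<tau> * ((\<alpha> * g * ?s - 0 * ?S) / ?S\<^sup>2)) (at Lg)"
    unfolding consq_eq_tax_factor_mult
    by (rule DERIV_mult_relative_gap[OF DERIV_const _ DERIV_const])
      (use total_employment_pos in simp_all)
  moreover have "0 \<le> ?s"
    using den_pos[OF \<tau>_nonneg] \<tau>_less_1 N_pos m_pos by simp
  then have "0 \<le> 0 * ((?S - \<alpha> * g) / ?S) + tax_factor \<tau> * ((\<alpha> * g * ?s - 0 * ?S) / ?S\<^sup>2)"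
    using tax_factor_pos[OF \<tau>_less_1] \<alpha>_pos g_nonneg by simp
  ultimately show ?thesis
    by blast
qed

lemma consq_decreasing_in_tau: "\<exists>D. ((\<lambda>x. q g x Lg) has_real_derivative D) (at \<tau>) \<and> D < 0"
proof -
  let ?S = "L g \<tau> Lg + Lg"
    and ?s = "- N * (N * m * (m * Lg + \<alpha> * F) + (N * m - \<alpha>) * ((m * g + F) * m * N)) / (den \<tau>)\<^sup>2"
    and ?h' = "- (N * m) / (N * m + \<alpha> * (1 - \<tau>))\<^sup>2"
  have "((\<lambda>x. L g x Lg + Lg) has_real_derivative ?s) (at \<tau>)"
    using DERIV_add[OF DERIV_empL_tau[OF \<tau>_nonneg] DERIV_const] by simp
  then have "((\<lambda>x. q g x Lg) has_real_derivative
               ?h' * ((?S - \<alpha> * g) / ?S) + tax_factor \<tau> * ((\<alpha> * g * ?s - 0 * ?S) / ?S\<^sup>2)) (at \<tau>)"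
    unfolding consq_eq_tax_factor_mult
    by (rule DERIV_mult_relative_gap[OF DERIV_tax_factor[OF \<tau>_less_1] _ DERIV_const])
      (use total_employment_pos in simp_all)
  moreover have "0 < N * m + \<alpha> * (1 - \<tau>)"
    using N_pos m_pos \<alpha>_pos \<tau>_less_1 by (simp add: add_pos_pos)
  then have "?h' * ((?S - \<alpha> * g) / ?S) < 0"
    using alpha_g_less_total_employment[OF g_nonneg \<tau>_nonneg \<tau>_less_1 Lg_nonneg]
      total_employment_pos N_pos m_pos
    by (intro mult_neg_pos) auto
  moreover have "?s \<le> 0"
    using N_pos m_pos \<alpha>_pos F_pos \<alpha>_less g_nonneg Lg_nonneg by simp
  then have "\<alpha> * g * ?s - 0 * ?S \<le> 0"
    using mult_nonneg_nonpos[of "\<alpha> * g" ?s] \<alpha>_pos g_nonneg by simp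
  then have "tax_factor \<tau> * ((\<alpha> * g * ?s - 0 * ?S) / ?S\<^sup>2) \<le> 0"
    using tax_factor_pos[OF \<tau>_less_1]
    by (intro mult_nonneg_nonpos divide_nonpos_nonneg) auto
  ultimately show ?thesis
    by (intro exI conjI) auto
qed

end

end

theorem theorem2:
  fixes N m F \<alpha> g \<tau> Lg :: real
  assumes "N > 0" "m > 0" "F > 0" "\<alpha> > 0" "N * m > \<alpha>"
    and "g \<ge> 0" "0 < \<tau>" "\<tau> < 1" "Lg \<ge> 0"
  shows "(\<exists>D. ((\<lambda>x. consq N m F \<alpha> x \<tau> Lg) has_real_derivative D) (at g) \<and> D < 0)
       \<and> (\<exists>D. ((\<lambda>x. consq N m F \<alpha> g x Lg) has_real_derivative D) (at \<tau>) \<and> D < 0)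
       \<and> (\<exists>D. ((\<lambda>x. consq N m F \<alpha> g \<tau> x) has_real_derivative D) (at Lg) \<and> D \<ge> 0)"
proof -
  interpret economy N m F \<alpha>
    using assms(1-5) by unfold_locales
  have "0 \<le> \<tau>"
    using assms(7) by simp
  then show ?thesis
    using consq_decreasing_in_g consq_decreasing_in_tau consq_nondecreasing_in_Lg assms(6,8,9)
    by blast
qed

end
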